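(* Let $0<q<1$ and $\Sigma\sim\mathrm{Mallows}(\mathbb{Z},q)$. Then for every $j\in\mathbb{Z}$, $$q\,\mathbb{P}(\Sigma(0)=j)\le\mathbb{P}(\Sigma(0)=j+1)\le\frac1q\,\mathbb{P}(\Sigma(0)=j).$$
   Context: For a finite set $A\subseteq\mathbb{Z}$ and a bijection $\pi:A\to A$, $\mathrm{inv}(\pi)$ is the number of pairs $i<j$ in $A$ with $\pi(i)>\pi(j)$, and $\Pi_A\sim\mathrm{Mallows}(A,q)$ means $\mathbb{P}(\Pi_A=\pi)\propto q^{\mathrm{inv}(\pi)}$ over bijections $\pi$ of $A$. For a bijection $\sigma$ of a set $B\subseteq\mathbb{Z}$ and finite $A\subseteq B$, the pattern $\sigma_A:A\to A$ is defined by $\sigma_A(a)=a_{(i)}$ when $\sigma(a)$ is the $i$-th smallest element of $\sigma[A]$, where $a_{(i)}$ is the $i$-th smallest element of $A$. For $0<q<1$, $\mathrm{Mallows}(\mathbb{Z},q)$ is Gnedin and Olshanski's bi-infinite Mallows measure: the law of a random bijection $\Sigma$ of $\mathbb{Z}$ such that $\Sigma_I\sim\mathrm{Mallows}(I,q)$ for every finite interval of integers $I$, and, with $I_n=\{-n,\dots,n\}$, almost surely for every $i\in\mathbb{Z}$ one has $\Sigma_{I_n}(i)=\Sigma(i)$ for all sufficiently large $n$. *)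

theory Defs
  imports "HOL-Probability.Probability"
begin

definition perms_on :: "int set \<Rightarrow> (int \<Rightarrow> int) set" where
  "perms_on A = {\<pi>. bij_betw \<pi> A A \<and> (\<forall>x. x \<notin> A \<longrightarrow> \<pi> x = x)}"

definition inv_count :: "int set \<Rightarrow> (int \<Rightarrow> int) \<Rightarrow> nat" where
  "inv_count A \<pi> = card {(i, j). i \<in> A \<and> j \<in> A \<and> i < j \<and> \<pi> i > \<pi> j}"

definition mallows_prob :: "real \<Rightarrow> int set \<Rightarrow> (int \<Rightarrow> int) \<Rightarrow> real" where
  "mallows_prob q A \<pi> =
     q ^ inv_count A \<pi> / (\<Sum>\<rho>\<in>perms_on A. q ^ inv_count A \<rho>)"

text \<open>Pattern sigma_A: sigma_A(a) = a_(i) where sigma(a) is the i-th smallest element of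
  sigma[A] (0-based rank: number of b in A with sigma b < sigma a), a_(i) the i-th smallest
  element of A; identity outside A.\<close>
definition pattern :: "(int \<Rightarrow> int) \<Rightarrow> int set \<Rightarrow> int \<Rightarrow> int" where
  "pattern \<sigma> A a =
     (if a \<in> A then sorted_list_of_set A ! card {b \<in> A. \<sigma> b < \<sigma> a} else a)"

text \<open>Sigma (a random function Z -> Z on the probability space M) has law Mallows(Z,q)
  in the sense of Gnedin--Olshanski.\<close>
definition is_mallows_Z :: "real \<Rightarrow> 'a measure \<Rightarrow> ('a \<Rightarrow> int \<Rightarrow> int) \<Rightarrow> bool" where
  "is_mallows_Z q M \<Sigma> \<longleftrightarrow>
     prob_space M \<and>
     \<Sigma> \<in> M \<rightarrow>\<^sub>M (\<Pi>\<^sub>M i\<in>(UNIV::int set). count_space (UNIV::int set)) \<and>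
     (AE \<omega> in M. bij (\<Sigma> \<omega>)) \<and>
     (\<forall>a b::int. \<forall>\<pi>\<in>perms_on {a..b}.
        measure M {\<omega> \<in> space M. pattern (\<Sigma> \<omega>) {a..b} = \<pi>} = mallows_prob q {a..b} \<pi>) \<and>
     (AE \<omega> in M. \<forall>i::int. eventually
        (\<lambda>n::nat. pattern (\<Sigma> \<omega>) {- int n..int n} i = \<Sigma> \<omega> i) sequentially)"

end

theory Submission
  imports Defs "HOL-Combinatorics.Permutations"
begin

text \<open>Composing a permutation with the transposition of the values j and j + 1 is a bijection
  between the permutations sending 0 to j and those sending 0 to j + 1, and it changes the number
  of inversions by at most one. Hence the claim holds for Mallows(A, q) on every finite interval
  A containing j and j + 1, and it passes to Mallows(Z, q) because the pattern of \<Sigma> on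
  {-n..n} almost surely agrees with \<Sigma> at 0 for large n.\<close>

lemma perms_on_eq_permutes: "perms_on A = {\<pi>. \<pi> permutes A}"
  unfolding perms_on_def
  by (auto intro: bij_imp_permutes permutes_imp_bij simp: permutes_not_in)

lemma finite_perms_on: "finite A \<Longrightarrow> finite (perms_on A)"
  by (simp add: perms_on_eq_permutes finite_permutations)

lemma transpose_comp_perms_on:
  "\<pi> \<in> perms_on A \<Longrightarrow> a \<in> A \<Longrightarrow> b \<in> A \<Longrightarrow> Transposition.transpose a b \<circ> \<pi> \<in> perms_on A"
  by (simp add: perms_on_eq_permutes permutes_compose permutes_swap_id)

lemma mallows_normaliser_pos:
  fixes q :: real
  assumes "finite A" "0 < q"
  shows "(\<Sum>\<rho>\<in>perms_on A. q ^ inv_count A \<rho>) > 0"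
  by (rule sum_pos2[where i = id])
     (use assms in \<open>auto simp: finite_perms_on perms_on_eq_permutes finite_permutations\<close>)

lemma sum_mallows_prob:
  assumes "finite A" "0 < q"
  shows "(\<Sum>\<pi>\<in>perms_on A. mallows_prob q A \<pi>) = 1"
  using mallows_normaliser_pos[OF assms]
  by (simp add: mallows_prob_def sum_divide_distrib[symmetric])

lemma mallows_prob_pos: "finite A \<Longrightarrow> 0 < q \<Longrightarrow> mallows_prob q A \<pi> > 0"
  using mallows_normaliser_pos[of A q] by (simp add: mallows_prob_def)

lemma transpose_adjacent_less:
  fixes x y j :: int
  assumes "x < y" "\<not> (x = j \<and> y = j + 1)"
  shows "Transposition.transpose j (j + 1) x < Transposition.transpose j (j + 1) y"
  using assms by (auto simp: Transposition.transpose_def)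

lemma inv_count_transpose_adjacent_le:
  assumes "finite A" "inj_on \<pi> A"
  shows "inv_count A (Transposition.transpose j (j + 1) \<circ> \<pi>) \<le> inv_count A \<pi> + 1"
proof -
  let ?\<tau> = "Transposition.transpose j (j + 1)"
  define S where "S = {(i, k). i \<in> A \<and> k \<in> A \<and> i < k \<and> \<pi> i > \<pi> k}"
  define S' where "S' = {(i, k). i \<in> A \<and> k \<in> A \<and> i < k \<and> ?\<tau> (\<pi> i) > ?\<tau> (\<pi> k)}"
  define E where "E = {(i, k). i \<in> A \<and> k \<in> A \<and> \<pi> i = j \<and> \<pi> k = j + 1}"
  have "(i, k) \<in> E" if "(i, k) \<in> S'" "(i, k) \<notin> S" for i k
  proof -
    have "\<pi> i < \<pi> k"
      using that inj_onD[OF assms(2), of i k] by (force simp: S_def S'_def)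
    with that show ?thesis
      using transpose_adjacent_less[of "\<pi> i" "\<pi> k" j] by (force simp: S'_def E_def)
  qed
  then have "S' \<subseteq> S \<union> E"
    by (auto simp: S'_def)
  moreover have "finite S" "finite E"
    using assms(1) by (auto intro: finite_subset[of _ "A \<times> A"] simp: S_def E_def)
  moreover have "card E \<le> 1"
    using \<open>finite E\<close> inj_onD[OF assms(2)] by (auto simp: card_le_Suc0_iff_eq E_def)
  ultimately have "card S' \<le> card S + 1"
    by (meson card_Un_le card_mono finite_UnI add_left_mono order_trans)
  then show ?thesis
    by (simp add: inv_count_def S_def S'_def)
qed

lemma mallows_prob_transpose_adjacent_ge:
  fixes q :: real
  assumes "finite A" "0 < q" "q \<le> 1" "\<pi> \<in> perms_on A"
  shows "q * mallows_prob q A \<pi> \<le> mallows_prob q A (Transposition.transpose j (j + 1) \<circ> \<pi>)"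
proof -
  have "inj_on \<pi> A"
    using assms(4) by (simp add: perms_on_def bij_betw_def)
  then have "q ^ (inv_count A \<pi> + 1) \<le> q ^ inv_count A (Transposition.transpose j (j + 1) \<circ> \<pi>)"
    using assms by (intro power_decreasing inv_count_transpose_adjacent_le) auto
  then show ?thesis
    using mallows_normaliser_pos[OF assms(1,2)]
    by (simp add: mallows_prob_def divide_right_mono mult.commute)
qed

definition mallows_value_prob :: "real \<Rightarrow> int set \<Rightarrow> int \<Rightarrow> int \<Rightarrow> real" where
  "mallows_value_prob q A x k = (\<Sum>\<pi>\<in>{\<pi> \<in> perms_on A. \<pi> x = k}. mallows_prob q A \<pi>)"

lemma mallows_value_prob_adjacent_bounds:
  fixes q :: real
  assumes "finite A" "j \<in> A" "j + 1 \<in> A" "0 < q" "q \<le> 1"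
  shows "q * mallows_value_prob q A x j \<le> mallows_value_prob q A x (j + 1)"
    and "q * mallows_value_prob q A x (j + 1) \<le> mallows_value_prob q A x j"
proof -
  let ?\<tau> = "Transposition.transpose j (j + 1)" and ?P = "mallows_prob q A"
  let ?S = "{\<pi> \<in> perms_on A. \<pi> x = j}"
  have reindex: "(\<Sum>\<pi>\<in>{\<pi> \<in> perms_on A. \<pi> x = j + 1}. f \<pi>) = (\<Sum>\<pi>\<in>?S. f (?\<tau> \<circ> \<pi>))" for f
    by (rule sum.reindex_bij_witness[where i = "\<lambda>\<pi>. ?\<tau> \<circ> \<pi>" and j = "\<lambda>\<pi>. ?\<tau> \<circ> \<pi>"])
       (use assms transpose_comp_perms_on in \<open>auto simp: o_assoc\<close>)
  have "(\<Sum>\<pi>\<in>?S. q * ?P \<pi>) \<le> (\<Sum>\<pi>\<in>?S. ?P (?\<tau> \<circ> \<pi>))"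
    using assms by (intro sum_mono mallows_prob_transpose_adjacent_ge) auto
  then show "q * mallows_value_prob q A x j \<le> mallows_value_prob q A x (j + 1)"
    by (simp add: mallows_value_prob_def reindex sum_distrib_left)
  have "(\<Sum>\<pi>\<in>?S. q * ?P (?\<tau> \<circ> \<pi>)) \<le> (\<Sum>\<pi>\<in>?S. ?P (?\<tau> \<circ> (?\<tau> \<circ> \<pi>)))"
    using assms transpose_comp_perms_on
    by (intro sum_mono mallows_prob_transpose_adjacent_ge) auto
  then show "q * mallows_value_prob q A x (j + 1) \<le> mallows_value_prob q A x j"
    by (simp add: mallows_value_prob_def reindex sum_distrib_left o_assoc)
qed

lemma (in prob_space) prob_tendsto_AE_eventually_mem_iff:
  assumes "\<And>n. A n \<in> events" "B \<in> events"
    and "AE \<omega> in M. eventually (\<lambda>n. \<omega> \<in> A n \<longleftrightarrow> \<omega> \<in> B) sequentially"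
  shows "(\<lambda>n. prob (A n)) \<longlonglongrightarrow> prob B"
proof -
  have "(\<lambda>n. integral\<^sup>L M (indicator (A n) :: 'a \<Rightarrow> real)) \<longlonglongrightarrow> integral\<^sup>L M (indicator B)"
  proof (rule integral_dominated_convergence[where w = "\<lambda>_. 1"])
    show "AE \<omega> in M. (\<lambda>n. indicator (A n) \<omega> :: real) \<longlonglongrightarrow> indicator B \<omega>"
      using assms(3)
      by eventually_elim (rule tendsto_eventually, erule eventually_mono, simp add: indicator_def)
  qed (use assms(1,2) in \<open>auto simp: indicator_def\<close>)
  then show ?thesis
    using assms(1,2) by (simp add: Int_absorb2 sets.sets_into_space)
qed

context
  fixes q :: real and M :: "'a measure" and \<Sigma> :: "'a \<Rightarrow> int \<Rightarrow> int"
  assumes mallows: "is_mallows_Z q M \<Sigma>" and q_pos: "0 < q"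
begin

interpretation prob_space M
  using mallows by (simp add: is_mallows_Z_def)

lemma mallows_Z_pattern_prob:
  "\<pi> \<in> perms_on {a..b} \<Longrightarrow>
     prob {\<omega> \<in> space M. pattern (\<Sigma> \<omega>) {a..b} = \<pi>} = mallows_prob q {a..b} \<pi>"
  using mallows by (simp add: is_mallows_Z_def)

text \<open>Measurability of pattern events is not part of the definition; it follows because
  events outside \<open>sets M\<close> have measure 0, whereas Mallows probabilities are positive.\<close>
lemma mallows_Z_pattern_event:
  assumes "\<pi> \<in> perms_on {a..b}"
  shows "{\<omega> \<in> space M. pattern (\<Sigma> \<omega>) {a..b} = \<pi>} \<in> events"
proof (rule ccontr)
  assume "{\<omega> \<in> space M. pattern (\<Sigma> \<omega>) {a..b} = \<pi>} \<notin> events"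
  then have "prob {\<omega> \<in> space M. pattern (\<Sigma> \<omega>) {a..b} = \<pi>} = 0"
    by (rule measure_notin_sets)
  then show False
    using mallows_Z_pattern_prob[OF assms] mallows_prob_pos[of "{a..b}" q \<pi>] q_pos by simp
qed

lemma mallows_Z_pattern_value_prob:
  fixes a b x k :: int
  defines "E \<equiv> {\<omega> \<in> space M. pattern (\<Sigma> \<omega>) {a..b} \<in> perms_on {a..b} \<and>
                              pattern (\<Sigma> \<omega>) {a..b} x = k}"
  shows "E \<in> events" and "prob E = mallows_value_prob q {a..b} x k"
proof -
  let ?S = "{\<pi> \<in> perms_on {a..b}. \<pi> x = k}"
  let ?F = "\<lambda>\<pi>. {\<omega> \<in> space M. pattern (\<Sigma> \<omega>) {a..b} = \<pi>}"
  have E: "E = (\<Union>\<pi>\<in>?S. ?F \<pi>)"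
    by (auto simp: E_def)
  have fin: "finite ?S"
    by (simp add: finite_perms_on)
  show "E \<in> events"
    unfolding E using fin mallows_Z_pattern_event by (intro sets.finite_UN) auto
  have "prob E = (\<Sum>\<pi>\<in>?S. prob (?F \<pi>))"
    unfolding E using fin mallows_Z_pattern_event
    by (intro measure_finite_Union) (auto simp: disjoint_family_on_def)
  then show "prob E = mallows_value_prob q {a..b} x k"
    by (simp add: mallows_value_prob_def mallows_Z_pattern_prob)
qed

lemma AE_mallows_Z_pattern_perms_on: "AE \<omega> in M. pattern (\<Sigma> \<omega>) {a..b} \<in> perms_on {a..b}"
proof -
  let ?U = "\<Union>\<pi>\<in>perms_on {a..b}. {\<omega> \<in> space M. pattern (\<Sigma> \<omega>) {a..b} = \<pi>}"
  have fin: "finite (perms_on {a..b})"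
    by (simp add: finite_perms_on)
  have "prob ?U = (\<Sum>\<pi>\<in>perms_on {a..b}. mallows_prob q {a..b} \<pi>)"
    using fin mallows_Z_pattern_event
    by (subst measure_finite_Union) (auto simp: disjoint_family_on_def mallows_Z_pattern_prob)
  also have "\<dots> = 1"
    using q_pos by (simp add: sum_mallows_prob)
  finally show ?thesis
    by (auto dest: AE_prob_1)
qed

lemma mallows_Z_value_event: "{\<omega> \<in> space M. \<Sigma> \<omega> x = k} \<in> events"
proof -
  have "(\<lambda>\<omega>. \<Sigma> \<omega> x) \<in> M \<rightarrow>\<^sub>M count_space UNIV"
    using mallows measurable_component_singleton[of x UNIV "\<lambda>_. count_space UNIV"]
    by (auto simp: is_mallows_Z_def intro: measurable_comp)
  then have "(\<lambda>\<omega>. \<Sigma> \<omega> x) -` {k} \<inter> space M \<in> events"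
    by (rule measurable_sets) simp
  moreover have "(\<lambda>\<omega>. \<Sigma> \<omega> x) -` {k} \<inter> space M = {\<omega> \<in> space M. \<Sigma> \<omega> x = k}"
    by auto
  ultimately show ?thesis
    by simp
qed

lemma mallows_value_prob_tendsto_mallows_Z:
  "(\<lambda>n. mallows_value_prob q {- int n..int n} x k) \<longlonglongrightarrow> prob {\<omega> \<in> space M. \<Sigma> \<omega> x = k}"
proof -
  define E where "E n = {\<omega> \<in> space M. pattern (\<Sigma> \<omega>) {- int n..int n} \<in> perms_on {- int n..int n} \<and>
                                     pattern (\<Sigma> \<omega>) {- int n..int n} x = k}" for n
  have "AE \<omega> in M. \<forall>n. pattern (\<Sigma> \<omega>) {- int n..int n} \<in> perms_on {- int n..int n}"
    by (simp add: AE_all_countable AE_mallows_Z_pattern_perms_on)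
  moreover have "AE \<omega> in M. eventually (\<lambda>n. pattern (\<Sigma> \<omega>) {- int n..int n} x = \<Sigma> \<omega> x) sequentially"
    using mallows by (auto simp: is_mallows_Z_def)
  ultimately have "AE \<omega> in M. eventually (\<lambda>n. \<omega> \<in> E n \<longleftrightarrow> \<omega> \<in> {\<omega> \<in> space M. \<Sigma> \<omega> x = k}) sequentially"
    by eventually_elim (auto simp: E_def elim!: eventually_mono)
  then have "(\<lambda>n. prob (E n)) \<longlonglongrightarrow> prob {\<omega> \<in> space M. \<Sigma> \<omega> x = k}"
    by (intro prob_tendsto_AE_eventually_mem_iff)
       (unfold E_def, auto simp: mallows_Z_pattern_value_prob mallows_Z_value_event)
  then show ?thesis
    unfolding E_def mallows_Z_pattern_value_prob .
qed

end

theorem lemma8p1: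
  fixes q :: real and M :: "'a measure" and \<Sigma> :: "'a \<Rightarrow> int \<Rightarrow> int"
  assumes "0 < q" and "q < 1" and "is_mallows_Z q M \<Sigma>"
  shows "\<forall>j::int.
           q * measure M {\<omega> \<in> space M. \<Sigma> \<omega> 0 = j} \<le> measure M {\<omega> \<in> space M. \<Sigma> \<omega> 0 = j + 1} \<and>
           measure M {\<omega> \<in> space M. \<Sigma> \<omega> 0 = j + 1} \<le> (1 / q) * measure M {\<omega> \<in> space M. \<Sigma> \<omega> 0 = j}"
proof
  fix j :: int
  let ?P = "\<lambda>n k. mallows_value_prob q {- int n..int n} 0 k"
  let ?p = "\<lambda>k. measure M {\<omega> \<in> space M. \<Sigma> \<omega> 0 = k}"
  have lim: "(\<lambda>n. ?P n k) \<longlonglongrightarrow> ?p k" for k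
    by (rule mallows_value_prob_tendsto_mallows_Z[OF assms(3,1)])
  have "eventually (\<lambda>n. j \<in> {- int n..int n} \<and> j + 1 \<in> {- int n..int n}) sequentially"
    by (rule eventually_sequentiallyI[of "nat \<bar>j\<bar> + 1"]) auto
  then have "eventually (\<lambda>n. q * ?P n j \<le> ?P n (j + 1) \<and> q * ?P n (j + 1) \<le> ?P n j) sequentially"
    by eventually_elim (use assms(1,2) mallows_value_prob_adjacent_bounds in auto)
  then have "q * ?p j \<le> ?p (j + 1)" "q * ?p (j + 1) \<le> ?p j"
    by (auto intro!: tendsto_le[OF _ lim tendsto_mult_left[OF lim]] elim: eventually_mono)
  then show "q * ?p j \<le> ?p (j + 1) \<and> ?p (j + 1) \<le> (1 / q) * ?p j"
    using assms(1) by (simp add: field_simps)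
qed

end
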